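(* Let $Q=2^q$, $n\ge1$, $\gamma\ge0$, $\varepsilon\in[0,1]$, $\delta_1,\delta_2\ge0$, and let $A\subseteq[Q]^n$, $B\subseteq[Q]^n$ be $\gamma$-uniform with $|A|\ge Q^{n(1-\delta_1)}$ and $|B|\ge Q^{n(1-\delta_2)}$. Let $\delta>0$ be arbitrarily small. If $W$ is drawn from $\mathcal{W}_{Q,\varepsilon}$, then with probability at least $1/2$, $$\mathcal{R}^{(0)}_{W,n}\ge 2q\left(1-\left(\frac{\delta_1+\delta_2}{2}+2(1+\gamma)\varepsilon+\delta\right)\right)-2.$$
   Context: Fix an integer $q\ge1$, $Q=2^q$, $[Q]=\{1,\dots,Q\}$, and a symbol $\phi\notin[Q]$. A channel is $W=(W_1,W_2)$ with $W_i:[Q]^2\to[Q]\cup\{\phi\}$; $W^{(n)}_i(x,y)=(W_i(x_1,y_1),\dots,W_i(x_n,y_n))$ for $x,y\in[Q]^n$. A zero-error code of block length $n$ with message sets $[M_1],[M_2]$ consists of encoders $E_i:[M_i]\to[Q]^n$ and decoders $D_i:([Q]\cup\{\phi\})^n\to[M_i]$ with $D_i(W^{(n)}_i(E_1(m_1),E_2(m_2)))=m_i$ for $i=1,2$ and all message pairs; $\mathcal{R}^{(0)}_{W,n}$ is the supremum of $\frac1n\log_2(M_1M_2)$ over such codes. $\mathcal{W}_{Q,\varepsilon}$ is the distribution over channels in which, independently for every $(x,y)\in[Q]^2$, $W(x,y)=(\phi,\phi)$ with probability $\varepsilon$ and $W(x,y)=(x,y)$ otherwise. A pair $(x^{(n)},y^{(n)})\in[Q]^n\times[Q]^n$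 is $\gamma$-uniform if for every $(\alpha,\beta)\in[Q]^2$, $(1-\gamma)\frac{n}{Q^2}\le|\{i\in[n]:(x_i,y_i)=(\alpha,\beta)\}|\le(1+\gamma)\frac{n}{Q^2}$; sets $A,B\subseteq[Q]^n$ are $\gamma$-uniform if every $(x^{(n)},y^{(n)})\in A\times B$ is $\gamma$-uniform. *)

theory Defs
  imports "HOL-Probability.Probability"
begin

text \<open>The alphabet [Q] = {1..Q}. Output symbols of type nat option; the erasure
  symbol phi is None, an alphabet symbol a is Some a.\<close>

type_synonym channel = "nat \<Rightarrow> nat \<Rightarrow> nat option \<times> nat option"

definition alph :: "nat \<Rightarrow> nat set" where
  "alph Q = {1..Q}"

definition words :: "nat \<Rightarrow> nat \<Rightarrow> nat list set" where
  "words Q n = {x. length x = n \<and> set x \<subseteq> alph Q}"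

definition out_words :: "nat \<Rightarrow> nat \<Rightarrow> nat option list set" where
  "out_words Q n = {v. length v = n \<and> (\<forall>a. Some a \<in> set v \<longrightarrow> a \<in> alph Q)}"

definition chan_n :: "channel \<Rightarrow> nat \<Rightarrow> nat list \<Rightarrow> nat list \<Rightarrow> nat option list" where
  "chan_n W i x y = map2 (\<lambda>a b. if i = 1 then fst (W a b) else snd (W a b)) x y"

definition zero_error_code ::
  "nat \<Rightarrow> channel \<Rightarrow> nat \<Rightarrow> nat \<Rightarrow> nat \<Rightarrow>
   (nat \<Rightarrow> nat list) \<Rightarrow> (nat \<Rightarrow> nat list) \<Rightarrow>
   (nat option list \<Rightarrow> nat) \<Rightarrow> (nat option list \<Rightarrow> nat) \<Rightarrow> bool" where
  "zero_error_code Q W n M1 M2 E1 E2 D1 D2 \<longleftrightarrow>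
     M1 \<ge> 1 \<and> M2 \<ge> 1 \<and>
     (\<forall>m\<in>{1..M1}. E1 m \<in> words Q n) \<and>
     (\<forall>m\<in>{1..M2}. E2 m \<in> words Q n) \<and>
     (\<forall>v\<in>out_words Q n. D1 v \<in> {1..M1} \<and> D2 v \<in> {1..M2}) \<and>
     (\<forall>m1\<in>{1..M1}. \<forall>m2\<in>{1..M2}.
        D1 (chan_n W 1 (E1 m1) (E2 m2)) = m1 \<and>
        D2 (chan_n W 2 (E1 m1) (E2 m2)) = m2)"

definition zero_error_rate :: "nat \<Rightarrow> channel \<Rightarrow> nat \<Rightarrow> real" where
  "zero_error_rate Q W n =
     Sup {log 2 (real (M1 * M2)) / real n | M1 M2.
            \<exists>E1 E2 D1 D2. zero_error_code Q W n M1 M2 E1 E2 D1 D2}"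

definition erasure_channel :: "(nat \<times> nat \<Rightarrow> bool) \<Rightarrow> channel" where
  "erasure_channel S x y = (if S (x, y) then (None, None) else (Some x, Some y))"

text \<open>The distribution W_{Q,eps}: independent erasure of each pair in [Q]^2 with prob. eps.
  Random erasure pattern (False outside [Q]^2, irrelevant there).\<close>
definition erasure_pattern_pmf :: "nat \<Rightarrow> real \<Rightarrow> (nat \<times> nat \<Rightarrow> bool) pmf" where
  "erasure_pattern_pmf Q \<epsilon> = Pi_pmf (alph Q \<times> alph Q) False (\<lambda>_. bernoulli_pmf \<epsilon>)"

definition gamma_uniform_pair :: "nat \<Rightarrow> nat \<Rightarrow> real \<Rightarrow> nat list \<Rightarrow> nat list \<Rightarrow> bool" where
  "gamma_uniform_pair Q n \<gamma> x y \<longleftrightarrow>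
     (\<forall>\<alpha>\<in>alph Q. \<forall>\<beta>\<in>alph Q.
        let c = real (card {i. i < n \<and> x ! i = \<alpha> \<and> y ! i = \<beta>}) in
        (1 - \<gamma>) * real n / real Q ^ 2 \<le> c \<and> c \<le> (1 + \<gamma>) * real n / real Q ^ 2)"

definition gamma_uniform_sets :: "nat \<Rightarrow> nat \<Rightarrow> real \<Rightarrow> nat list set \<Rightarrow> nat list set \<Rightarrow> bool" where
  "gamma_uniform_sets Q n \<gamma> A B \<longleftrightarrow> (\<forall>x\<in>A. \<forall>y\<in>B. gamma_uniform_pair Q n \<gamma> x y)"

end

theory Submission
  imports Defs
begin

text \<open>By Markov's inequality, with probability at least 1/2 at most
  \<open>(2(1+\<gamma>)\<epsilon> + \<delta>) Q\<^sup>2 / (1+\<gamma>)\<close> of the \<open>Q\<^sup>2\<close> input pairs are erased. By \<open>\<gamma>\<close>-uniformity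
  every codeword pair \<open>(x,y) \<in> A \<times> B\<close> then has at most \<open>t = (2(1+\<gamma>)\<epsilon> + \<delta>) n\<close> erased
  positions. Greedily thin \<open>A\<close> and \<open>B\<close> to subsets whose distinct elements are at Hamming
  distance more than \<open>t\<close>; since a Hamming ball of radius \<open>t\<close> has at most \<open>2\<^sup>n Q\<^sup>t\<close> points,
  this loses a factor of at most \<open>2\<^sup>n Q\<^sup>t\<close> on each side. Two codewords of a thinned set
  that give the same channel output to a receiver differ only in erased positions, hence
  in at most \<open>t\<close> positions, so they are equal: the thinned sets form a zero-error code.\<close>

subsection \<open>Hamming balls and separated subsets\<close>

definition hamming_dist :: "nat \<Rightarrow> nat list \<Rightarrow> nat list \<Rightarrow> nat" where
  "hamming_dist n x y = card {i. i < n \<and> x ! i \<noteq> y ! i}"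

definition hamming_ball :: "nat \<Rightarrow> nat \<Rightarrow> real \<Rightarrow> nat list \<Rightarrow> nat list set" where
  "hamming_ball Q n t a = {z \<in> words Q n. real (hamming_dist n a z) \<le> t}"

definition hamming_separated :: "nat \<Rightarrow> real \<Rightarrow> nat list set \<Rightarrow> bool" where
  "hamming_separated n t A \<longleftrightarrow> (\<forall>x\<in>A. \<forall>y\<in>A. x \<noteq> y \<longrightarrow> real (hamming_dist n x y) > t)"

lemma hamming_dist_commute: "hamming_dist n x y = hamming_dist n y x"
  unfolding hamming_dist_def by (metis (mono_tags, lifting))

lemma hamming_dist_self [simp]: "hamming_dist n x x = 0"
  unfolding hamming_dist_def by simp

lemma finite_words [simp]: "finite (words Q n)"
proof -
  have "words Q n = {xs. set xs \<subseteq> alph Q \<and> length xs = n}"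
    unfolding words_def by auto
  then show ?thesis
    using finite_lists_length_eq[of "alph Q" n] by (simp add: alph_def)
qed

lemma inj_on_differences:
  "inj_on (\<lambda>z. ({i. i < n \<and> a ! i \<noteq> z ! i}, restrict ((!) z) {i. i < n \<and> a ! i \<noteq> z ! i}))
     (words Q n)"
proof (rule inj_onI)
  fix z1 z2 assume z1: "z1 \<in> words Q n" and z2: "z2 \<in> words Q n"
  let ?D = "\<lambda>z. {i. i < n \<and> a ! i \<noteq> z ! i}"
  assume "(?D z1, restrict ((!) z1) (?D z1)) = (?D z2, restrict ((!) z2) (?D z2))"
  then have D: "?D z1 = ?D z2" and R: "restrict ((!) z1) (?D z1) = restrict ((!) z2) (?D z2)"
    unfolding prod.inject by blast+
  show "z1 = z2"
  proof (rule nth_equalityI)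
    show "length z1 = length z2" using z1 z2 by (simp add: words_def)
    fix i assume "i < length z1"
    then have "i < n" using z1 by (simp add: words_def)
    show "z1 ! i = z2 ! i"
    proof (cases "i \<in> ?D z1")
      case True
      then have "z1 ! i = restrict ((!) z1) (?D z1) i" by simp
      also have "\<dots> = restrict ((!) z2) (?D z2) i" using R by simp
      also have "\<dots> = z2 ! i" using True D by simp
      finally show ?thesis .
    next
      case False
      then have "i \<notin> ?D z2" using D by simp
      then show ?thesis using False \<open>i < n\<close> by simp
    qed
  qed
qed

lemma card_hamming_ball_le:
  assumes "Q \<ge> 1"
  shows "real (card (hamming_ball Q n t a)) \<le> 2 ^ n * real Q powr t"
proof -
  define Ds where "Ds = {D. D \<subseteq> {..<n} \<and> real (card D) \<le> t}"
  define T where "T = Sigma Ds (\<lambda>D. PiE D (\<lambda>_. alph Q))"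
  have finDs: "finite Ds" and finD: "\<And>D. D \<in> Ds \<Longrightarrow> finite D"
    unfolding Ds_def by (auto intro: finite_subset)
  have "card (hamming_ball Q n t a) \<le> card T"
  proof (rule card_inj_on_le)
    show "inj_on (\<lambda>z. ({i. i < n \<and> a ! i \<noteq> z ! i}, restrict ((!) z) {i. i < n \<and> a ! i \<noteq> z ! i}))
            (hamming_ball Q n t a)"
      by (rule inj_on_subset[OF inj_on_differences]) (auto simp: hamming_ball_def)
    show "(\<lambda>z. ({i. i < n \<and> a ! i \<noteq> z ! i}, restrict ((!) z) {i. i < n \<and> a ! i \<noteq> z ! i}))
            ` hamming_ball Q n t a \<subseteq> T"
      by (auto simp: T_def Ds_def hamming_ball_def hamming_dist_def words_def split: if_splits)
    show "finite T"
      unfolding T_def using finDs finD by (auto simp: alph_def intro!: finite_PiE)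
  qed
  then have "real (card (hamming_ball Q n t a)) \<le> real (card T)" by simp
  also have "\<dots> = (\<Sum>D\<in>Ds. real Q ^ card D)"
    unfolding T_def using finDs by (simp add: card_PiE alph_def finite_PiE finD)
  also have "\<dots> \<le> (\<Sum>D\<in>Ds. real Q powr t)"
  proof (rule sum_mono)
    fix D assume "D \<in> Ds"
    then have "real Q powr real (card D) \<le> real Q powr t"
      using assms by (intro powr_mono) (auto simp: Ds_def)
    then show "real Q ^ card D \<le> real Q powr t"
      using assms by (simp add: powr_realpow)
  qed
  also have "\<dots> \<le> 2 ^ n * real Q powr t"
  proof -
    have "card Ds \<le> card (Pow {..<n})"
      unfolding Ds_def by (rule card_mono) auto
    then show ?thesis
      by (simp add: card_Pow mult_right_mono)
  qed
  finally show ?thesis .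
qed

lemma hamming_separated_insert:
  assumes "hamming_separated n t A" and "\<And>a. a \<in> A \<Longrightarrow> real (hamming_dist n a x) > t"
  shows "hamming_separated n t (insert x A)"
  using assms unfolding hamming_separated_def by (metis hamming_dist_commute insert_iff)

lemma exists_separated_covering_subset:
  assumes "finite A" and "A \<subseteq> words Q n" and "t \<ge> 0"
  shows "\<exists>A'\<subseteq>A. hamming_separated n t A' \<and> A \<subseteq> (\<Union>a\<in>A'. hamming_ball Q n t a)"
  using assms
proof (induction A rule: finite_induct)
  case empty
  then show ?case by (auto simp: hamming_separated_def)
next
  case (insert x F)
  then obtain F' where F': "F' \<subseteq> F" "hamming_separated n t F'"
    "F \<subseteq> (\<Union>a\<in>F'. hamming_ball Q n t a)" by auto
  have x: "x \<in> words Q n" using insert.prems by simp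
  show ?case
  proof (cases "\<exists>a\<in>F'. real (hamming_dist n a x) \<le> t")
    case True
    then have "x \<in> (\<Union>a\<in>F'. hamming_ball Q n t a)" using x by (auto simp: hamming_ball_def)
    then show ?thesis using F' by (intro exI[of _ F']) auto
  next
    case False
    then have "hamming_separated n t (insert x F')"
      using F'(2) by (intro hamming_separated_insert) auto
    moreover have "x \<in> hamming_ball Q n t x" using x insert.prems by (simp add: hamming_ball_def)
    ultimately show ?thesis using F' by (intro exI[of _ "insert x F'"]) auto
  qed
qed

lemma exists_large_separated_subset:
  assumes "finite A" and "A \<subseteq> words Q n" and "t \<ge> 0" and "Q \<ge> 1"
  shows "\<exists>A'\<subseteq>A. hamming_separated n t A' \<and>
           real (card A) \<le> real (card A') * (2 ^ n * real Q powr t)"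
proof -
  obtain A' where A': "A' \<subseteq> A" "hamming_separated n t A'"
    and cover: "A \<subseteq> (\<Union>a\<in>A'. hamming_ball Q n t a)"
    using exists_separated_covering_subset[OF assms(1-3)] by auto
  have "finite A'" using A'(1) assms(1) finite_subset by auto
  have "card A \<le> card (\<Union>a\<in>A'. hamming_ball Q n t a)"
    using cover by (rule card_mono[rotated]) (auto simp: hamming_ball_def intro: finite_subset)
  also have "\<dots> \<le> (\<Sum>a\<in>A'. card (hamming_ball Q n t a))"
    by (rule card_UN_le[OF \<open>finite A'\<close>])
  finally have "real (card A) \<le> (\<Sum>a\<in>A'. real (card (hamming_ball Q n t a)))"
    by (simp flip: of_nat_sum)
  also have "\<dots> \<le> (\<Sum>a\<in>A'. 2 ^ n * real Q powr t)"
    using assms(4) by (intro sum_mono card_hamming_ball_le)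
  finally show ?thesis using A' by auto
qed

lemma exists_separated_subset_log_card_ge:
  assumes "finite A" and "A \<subseteq> words (2 ^ q) n" and "t \<ge> 0"
    and "real (card A) \<ge> real ((2::nat) ^ q) powr a"
  shows "\<exists>A'\<subseteq>A. hamming_separated n t A' \<and> A' \<noteq> {} \<and>
           log 2 (real (card A')) \<ge> real q * a - real n - real q * t"
proof -
  have powr_Q: "((2::real) ^ q) powr s = 2 powr (real q * s)" for s
    by (simp add: powr_realpow[symmetric] powr_powr)
  obtain A' where A': "A' \<subseteq> A" "hamming_separated n t A'"
    and card_A: "real (card A) \<le> real (card A') * (2 ^ n * real ((2::nat) ^ q) powr t)"
    using exists_large_separated_subset[OF assms(1-3)] by auto
  have "2 powr (real q * a) \<le> real (card A') * 2 powr (real n + real q * t)"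
    using assms(4) card_A by (simp add: powr_Q powr_add powr_realpow)
  then have pos: "real (card A') > 0"
    using powr_gt_zero[of 2 "real q * a"] by (cases "card A' = 0") auto
  have "real q * a = log 2 (2 powr (real q * a))" by simp
  also have "\<dots> \<le> log 2 (real (card A') * 2 powr (real n + real q * t))"
    using \<open>2 powr (real q * a) \<le> _\<close> pos by (subst log_le_cancel_iff) auto
  also have "\<dots> = log 2 (real (card A')) + real n + real q * t"
    using pos by (simp add: log_mult)
  finally show ?thesis using A' pos by auto
qed

subsection \<open>Random erasure patterns\<close>

lemma expectation_card_Pi_bernoulli:
  assumes "finite P" and "0 \<le> \<epsilon>" and "\<epsilon> \<le> 1"
  shows "measure_pmf.expectation (Pi_pmf P d (\<lambda>_. bernoulli_pmf \<epsilon>)) (\<lambda>S. real (card {p \<in> P. S p}))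
           = \<epsilon> * real (card P)"
proof -
  let ?M = "Pi_pmf P d (\<lambda>_. bernoulli_pmf \<epsilon>)"
  have ind: "integrable ?M (indicator {S. S p} :: _ \<Rightarrow> real)" for p
    by (rule measure_pmf.integrable_const_bound[where B=1]) (auto simp: indicator_def)
  have prob: "measure_pmf.prob ?M {S. S p} = \<epsilon>" if "p \<in> P" for p
  proof -
    have "measure_pmf.prob ?M {S. S p} = measure_pmf.prob (map_pmf (\<lambda>S. S p) ?M) {True}"
      by (simp add: measure_map_pmf vimage_def)
    also have "map_pmf (\<lambda>S. S p) ?M = bernoulli_pmf \<epsilon>"
      using Pi_pmf_component[OF assms(1), of p d "\<lambda>_. bernoulli_pmf \<epsilon>"] that by simp
    finally show ?thesis using assms by (simp add: measure_pmf_single)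
  qed
  have "(\<lambda>S. real (card {p \<in> P. S p})) = (\<lambda>S. \<Sum>p\<in>P. indicator {S. S p} S)"
    using assms(1) by (simp add: indicator_def sum.If_cases Int_def conj_commute)
  then have "measure_pmf.expectation ?M (\<lambda>S. real (card {p \<in> P. S p}))
               = (\<Sum>p\<in>P. measure_pmf.prob ?M {S. S p})"
    using ind by (simp add: Bochner_Integration.integral_sum)
  also have "\<dots> = \<epsilon> * real (card P)" using prob by simp
  finally show ?thesis .
qed

lemma prob_card_Pi_bernoulli_le:
  assumes "finite P" and "0 \<le> \<epsilon>" and "\<epsilon> \<le> 1" and "c > 0" and "2 * \<epsilon> * real (card P) \<le> c"
  shows "measure_pmf.prob (Pi_pmf P d (\<lambda>_. bernoulli_pmf \<epsilon>)) {S. real (card {p \<in> P. S p}) \<le> c}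
           \<ge> 1 / 2"
proof -
  let ?M = "Pi_pmf P d (\<lambda>_. bernoulli_pmf \<epsilon>)"
  let ?K = "\<lambda>S. real (card {p \<in> P. S p})"
  have "integrable ?M ?K"
    by (rule measure_pmf.integrable_const_bound[where B="real (card P)"])
      (auto intro: card_mono assms(1))
  then have "measure_pmf.prob ?M {S \<in> space ?M. ?K S \<ge> c} \<le> measure_pmf.expectation ?M ?K / c"
    by (intro integral_Markov_inequality_measure[where A="{}"]) (auto simp: assms(4))
  also have "\<dots> \<le> 1 / 2"
    using assms by (simp add: expectation_card_Pi_bernoulli divide_simps)
  finally have "measure_pmf.prob ?M {S. ?K S \<ge> c} \<le> 1 / 2" by simp
  moreover have "measure_pmf.prob ?M (UNIV - {S. ?K S \<ge> c}) \<le> measure_pmf.prob ?M {S. ?K S \<le> c}"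
    by (rule measure_pmf.finite_measure_mono) auto
  moreover have "measure_pmf.prob ?M (UNIV - {S. ?K S \<ge> c}) = 1 - measure_pmf.prob ?M {S. ?K S \<ge> c}"
    using measure_pmf.prob_compl[of "{S. ?K S \<ge> c}" ?M] by simp
  ultimately show ?thesis by simp
qed

subsection \<open>Zero-error codes\<close>

lemma exists_decoder:
  fixes M :: nat
  assumes "M \<ge> 1"
    and "\<And>m m' k k'. m \<in> {1..M} \<Longrightarrow> m' \<in> {1..M} \<Longrightarrow> k \<in> K \<Longrightarrow> k' \<in> K \<Longrightarrow>
           f m k = f m' k' \<Longrightarrow> m = m'"
  shows "\<exists>D. (\<forall>v. D v \<in> {1..M}) \<and> (\<forall>m\<in>{1..M}. \<forall>k\<in>K. D (f m k) = m)"
proof -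
  define P where "P = (\<lambda>v m. m \<in> {1..M} \<and> (\<exists>k\<in>K. f m k = v))"
  define D where "D v = (if \<exists>m. P v m then SOME m. P v m else 1)" for v
  have "D v \<in> {1..M}" for v
  proof (cases "\<exists>m. P v m")
    case True
    then have "P v (SOME m. P v m)" by (rule someI_ex)
    then show ?thesis using True by (simp add: D_def P_def)
  next
    case False
    then show ?thesis using assms(1) by (auto simp: D_def)
  qed
  moreover have "D (f m k) = m" if "m \<in> {1..M}" "k \<in> K" for m k
  proof -
    have ex: "\<exists>m'. P (f m k) m'" using that by (auto simp: P_def)
    then have "P (f m k) (SOME m'. P (f m k) m')" by (rule someI_ex)
    then have "(SOME m'. P (f m k) m') = m"
      unfolding P_def using assms(2) that by blast
    then show ?thesis using ex by (simp add: D_def)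
  qed
  ultimately show ?thesis by blast
qed

lemma exists_zero_error_code:
  assumes "finite A" "A \<noteq> {}" "finite B" "B \<noteq> {}" "A \<subseteq> words Q n" "B \<subseteq> words Q n"
    and decode1: "\<And>x x' y y'. x \<in> A \<Longrightarrow> x' \<in> A \<Longrightarrow> y \<in> B \<Longrightarrow> y' \<in> B \<Longrightarrow>
               chan_n W 1 x y = chan_n W 1 x' y' \<Longrightarrow> x = x'"
    and decode2: "\<And>x x' y y'. x \<in> A \<Longrightarrow> x' \<in> A \<Longrightarrow> y \<in> B \<Longrightarrow> y' \<in> B \<Longrightarrow>
               chan_n W 2 x y = chan_n W 2 x' y' \<Longrightarrow> y = y'"
  shows "\<exists>E1 E2 D1 D2. zero_error_code Q W n (card A) (card B) E1 E2 D1 D2"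
proof -
  obtain E1 where E1: "bij_betw E1 {1..card A} A"
    using ex_bij_betw_nat_finite_1[OF assms(1)] by auto
  obtain E2 where E2: "bij_betw E2 {1..card B} B"
    using ex_bij_betw_nat_finite_1[OF assms(3)] by auto
  have M: "card A \<ge> 1" "card B \<ge> 1"
    using assms(1-4) by (auto simp: Suc_le_eq card_gt_0_iff)
  have unique1: "m1 = m1'"
    if "m1 \<in> {1..card A}" "m1' \<in> {1..card A}" "m2 \<in> {1..card B}" "m2' \<in> {1..card B}"
      and "chan_n W 1 (E1 m1) (E2 m2) = chan_n W 1 (E1 m1') (E2 m2')" for m1 m1' m2 m2'
  proof (rule inj_onD[OF bij_betw_imp_inj_on[OF E1] _ that(1,2)])
    show "E1 m1 = E1 m1'"
      using decode1 bij_betw_apply[OF E1] bij_betw_apply[OF E2] that by blast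
  qed
  have unique2: "m2 = m2'"
    if "m2 \<in> {1..card B}" "m2' \<in> {1..card B}" "m1 \<in> {1..card A}" "m1' \<in> {1..card A}"
      and "chan_n W 2 (E1 m1) (E2 m2) = chan_n W 2 (E1 m1') (E2 m2')" for m1 m1' m2 m2'
  proof (rule inj_onD[OF bij_betw_imp_inj_on[OF E2] _ that(1,2)])
    show "E2 m2 = E2 m2'"
      using decode2 bij_betw_apply[OF E1] bij_betw_apply[OF E2] that by blast
  qed
  have "\<exists>D1. (\<forall>v. D1 v \<in> {1..card A}) \<and>
          (\<forall>m1\<in>{1..card A}. \<forall>m2\<in>{1..card B}. D1 (chan_n W 1 (E1 m1) (E2 m2)) = m1)"
    by (rule exists_decoder[OF M(1)], rule unique1)
  moreover have "\<exists>D2. (\<forall>v. D2 v \<in> {1..card B}) \<and>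
          (\<forall>m2\<in>{1..card B}. \<forall>m1\<in>{1..card A}. D2 (chan_n W 2 (E1 m1) (E2 m2)) = m2)"
    by (rule exists_decoder[OF M(2)], rule unique2)
  ultimately obtain D1 D2 where
    D1: "\<forall>v. D1 v \<in> {1..card A}"
      "\<forall>m1\<in>{1..card A}. \<forall>m2\<in>{1..card B}. D1 (chan_n W 1 (E1 m1) (E2 m2)) = m1"
    and D2: "\<forall>v. D2 v \<in> {1..card B}"
      "\<forall>m2\<in>{1..card B}. \<forall>m1\<in>{1..card A}. D2 (chan_n W 2 (E1 m1) (E2 m2)) = m2"
    by blast
  have "\<forall>m\<in>{1..card A}. E1 m \<in> words Q n" "\<forall>m\<in>{1..card B}. E2 m \<in> words Q n"
    using bij_betw_apply[OF E1] bij_betw_apply[OF E2] assms(5,6) by blast+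
  then have "zero_error_code Q W n (card A) (card B) E1 E2 D1 D2"
    unfolding zero_error_code_def using M D1 D2 by blast
  then show ?thesis by blast
qed

lemma zero_error_code_card_le:
  assumes "zero_error_code Q W n M1 M2 E1 E2 D1 D2"
  shows "M1 \<le> card (words Q n)" and "M2 \<le> card (words Q n)"
proof -
  have M: "1 \<in> {1..M1}" "1 \<in> {1..M2}"
    and decode: "\<forall>m1\<in>{1..M1}. \<forall>m2\<in>{1..M2}.
                   D1 (chan_n W 1 (E1 m1) (E2 m2)) = m1 \<and> D2 (chan_n W 2 (E1 m1) (E2 m2)) = m2"
    and E: "E1 ` {1..M1} \<subseteq> words Q n" "E2 ` {1..M2} \<subseteq> words Q n"
    using assms unfolding zero_error_code_def by auto
  have "inj_on E1 {1..M1}"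
    by (rule inj_onI) (metis M(2) decode)
  then show "M1 \<le> card (words Q n)"
    using card_inj_on_le[OF _ E(1)] by simp
  have "inj_on E2 {1..M2}"
    by (rule inj_onI) (metis M(1) decode)
  then show "M2 \<le> card (words Q n)"
    using card_inj_on_le[OF _ E(2)] by simp
qed

lemma zero_error_rate_ge:
  assumes "zero_error_code Q W n M1 M2 E1 E2 D1 D2"
  shows "log 2 (real (M1 * M2)) / real n \<le> zero_error_rate Q W n"
  unfolding zero_error_rate_def
proof (rule cSup_upper)
  show "log 2 (real (M1 * M2)) / real n \<in> {log 2 (real (M1 * M2)) / real n | M1 M2.
          \<exists>E1 E2 D1 D2. zero_error_code Q W n M1 M2 E1 E2 D1 D2}"
    using assms by blast
  let ?N = "card (words Q n)"
  show "bdd_above {log 2 (real (M1 * M2)) / real n | M1 M2.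
          \<exists>E1 E2 D1 D2. zero_error_code Q W n M1 M2 E1 E2 D1 D2}"
  proof (rule bdd_aboveI, clarify)
    fix M1 M2 E1 E2 D1 D2 assume code: "zero_error_code Q W n M1 M2 E1 E2 D1 D2"
    then have "real (M1 * M2) \<le> real (?N * ?N)"
      by (intro of_nat_mono mult_le_mono zero_error_code_card_le)
    moreover have "real (M1 * M2) > 0" using code by (simp add: zero_error_code_def)
    ultimately have "log 2 (real (M1 * M2)) \<le> log 2 (real (?N * ?N))"
      by (intro log_mono) simp_all
    then show "log 2 (real (M1 * M2)) / real n \<le> log 2 (real (?N * ?N)) / real n"
      by (simp add: divide_right_mono)
  qed
qed

subsection \<open>Erasure channels\<close>

lemma card_erased_positions_le:
  assumes "x \<in> words Q n" and "y \<in> words Q n" and "gamma_uniform_pair Q n \<gamma> x y"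
  shows "real (card {i. i < n \<and> S (x ! i, y ! i)})
           \<le> real (card {p \<in> alph Q \<times> alph Q. S p}) * ((1 + \<gamma>) * real n / real Q ^ 2)"
proof -
  let ?P = "{p \<in> alph Q \<times> alph Q. S p}"
  let ?C = "\<lambda>p. {i. i < n \<and> x ! i = fst p \<and> y ! i = snd p}"
  have finP: "finite ?P" by (simp add: alph_def)
  have "{i. i < n \<and> S (x ! i, y ! i)} \<subseteq> (\<Union>p\<in>?P. ?C p)"
    using assms(1,2) by (force simp: words_def)
  then have "card {i. i < n \<and> S (x ! i, y ! i)} \<le> card (\<Union>p\<in>?P. ?C p)"
    using finP by (intro card_mono) auto
  also have "\<dots> \<le> (\<Sum>p\<in>?P. card (?C p))" by (rule card_UN_le[OF finP])
  finally have "real (card {i. i < n \<and> S (x ! i, y ! i)}) \<le> (\<Sum>p\<in>?P. real (card (?C p)))"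
    by (simp flip: of_nat_sum)
  also have "\<dots> \<le> (\<Sum>p\<in>?P. (1 + \<gamma>) * real n / real Q ^ 2)"
    using assms(3) by (intro sum_mono) (auto simp: gamma_uniform_pair_def Let_def)
  finally show ?thesis by simp
qed

lemma nth_chan_n_erasure_channel:
  assumes "i < length x" and "length y = length x"
  shows "chan_n (erasure_channel S) k x y ! i
           = (if S (x ! i, y ! i) then None else Some (if k = 1 then x ! i else y ! i))"
  using assms by (simp add: chan_n_def erasure_channel_def)

lemma hamming_dist_le_erased_1:
  assumes "x \<in> words Q n" "x' \<in> words Q n" "y \<in> words Q n" "y' \<in> words Q n"
    and "chan_n (erasure_channel S) 1 x y = chan_n (erasure_channel S) 1 x' y'"
  shows "hamming_dist n x x' \<le> card {i. i < n \<and> S (x ! i, y ! i)}"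
  unfolding hamming_dist_def
proof (rule card_mono)
  show "{i. i < n \<and> x ! i \<noteq> x' ! i} \<subseteq> {i. i < n \<and> S (x ! i, y ! i)}"
    using assms nth_chan_n_erasure_channel[of _ x y S 1] nth_chan_n_erasure_channel[of _ x' y' S 1]
    by (fastforce simp: words_def split: if_splits)
qed simp

lemma hamming_dist_le_erased_2:
  assumes "x \<in> words Q n" "x' \<in> words Q n" "y \<in> words Q n" "y' \<in> words Q n"
    and "chan_n (erasure_channel S) 2 x y = chan_n (erasure_channel S) 2 x' y'"
  shows "hamming_dist n y y' \<le> card {i. i < n \<and> S (x ! i, y ! i)}"
  unfolding hamming_dist_def
proof (rule card_mono)
  show "{i. i < n \<and> y ! i \<noteq> y' ! i} \<subseteq> {i. i < n \<and> S (x ! i, y ! i)}"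
    using assms nth_chan_n_erasure_channel[of _ x y S 2] nth_chan_n_erasure_channel[of _ x' y' S 2]
    by (fastforce simp: words_def split: if_splits)
qed simp

lemma exists_zero_error_code_separated:
  assumes "finite A" "A \<noteq> {}" "finite B" "B \<noteq> {}" "A \<subseteq> words Q n" "B \<subseteq> words Q n"
    and "hamming_separated n t A" and "hamming_separated n t B"
    and few_erased: "\<And>x y. x \<in> A \<Longrightarrow> y \<in> B \<Longrightarrow> real (card {i. i < n \<and> S (x ! i, y ! i)}) \<le> t"
  shows "\<exists>E1 E2 D1 D2. zero_error_code Q (erasure_channel S) n (card A) (card B) E1 E2 D1 D2"
proof (rule exists_zero_error_code[OF assms(1-6)])
  fix x x' y y' assume in_AB: "x \<in> A" "x' \<in> A" "y \<in> B" "y' \<in> B"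
  then have words: "x \<in> words Q n" "x' \<in> words Q n" "y \<in> words Q n" "y' \<in> words Q n"
    using assms(5,6) by auto
  show "x = x'" if "chan_n (erasure_channel S) 1 x y = chan_n (erasure_channel S) 1 x' y'"
    using hamming_dist_le_erased_1[OF words that] few_erased[of x y] assms(7) in_AB
    unfolding hamming_separated_def by force
  show "y = y'" if "chan_n (erasure_channel S) 2 x y = chan_n (erasure_channel S) 2 x' y'"
    using hamming_dist_le_erased_2[OF words that] few_erased[of x y] assms(8) in_AB
    unfolding hamming_separated_def by force
qed

lemma zero_error_rate_ge_few_erasures:
  assumes "n \<ge> 1" and "t \<ge> 0" and "A \<subseteq> words (2 ^ q) n" and "B \<subseteq> words (2 ^ q) n"
    and "real (card A) \<ge> real ((2::nat) ^ q) powr a1"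
    and "real (card B) \<ge> real ((2::nat) ^ q) powr a2"
    and "\<And>x y. x \<in> A \<Longrightarrow> y \<in> B \<Longrightarrow> real (card {i. i < n \<and> S (x ! i, y ! i)}) \<le> t"
  shows "zero_error_rate (2 ^ q) (erasure_channel S) n
           \<ge> (real q * a1 + real q * a2 - 2 * real n - 2 * real q * t) / real n"
proof -
  have "finite A" "finite B" using assms(3,4) finite_words finite_subset by blast+
  obtain A' where A': "A' \<subseteq> A" "hamming_separated n t A'" "A' \<noteq> {}"
    and log_A': "log 2 (real (card A')) \<ge> real q * a1 - real n - real q * t"
    using exists_separated_subset_log_card_ge[OF \<open>finite A\<close> assms(3,2,5)] by blast
  obtain B' where B': "B' \<subseteq> B" "hamming_separated n t B'" "B' \<noteq> {}"
    and log_B': "log 2 (real (card B')) \<ge> real q * a2 - real n - real q * t"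
    using exists_separated_subset_log_card_ge[OF \<open>finite B\<close> assms(4,2,6)] by blast
  have "finite A'" "finite B'"
    using A'(1) B'(1) \<open>finite A\<close> \<open>finite B\<close> finite_subset by auto
  then obtain E1 E2 D1 D2 where
    "zero_error_code (2 ^ q) (erasure_channel S) n (card A') (card B') E1 E2 D1 D2"
    using exists_zero_error_code_separated[of A' B' "2 ^ q" n t S] A' B' assms(3,4,7) by blast
  then have "log 2 (real (card A' * card B')) / real n \<le> zero_error_rate (2 ^ q) (erasure_channel S) n"
    by (rule zero_error_rate_ge)
  moreover have "log 2 (real (card A' * card B')) = log 2 (real (card A')) + log 2 (real (card B'))"
    using \<open>finite A'\<close> \<open>finite B'\<close> A'(3) B'(3) by (simp add: log_mult card_gt_0_iff)
  moreover have "(real q * a1 + real q * a2 - 2 * real n - 2 * real q * t) / real n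
                   \<le> (log 2 (real (card A')) + log 2 (real (card B'))) / real n"
    using log_A' log_B' by (intro divide_right_mono) auto
  ultimately show ?thesis by simp
qed

lemma prob_few_erasures_per_pair:
  assumes "Q \<ge> 1" and "\<gamma> \<ge> 0" and "0 \<le> \<epsilon>" and "\<epsilon> \<le> 1"
    and "A \<subseteq> words Q n" and "B \<subseteq> words Q n" and "gamma_uniform_sets Q n \<gamma> A B"
    and "\<theta> > 0" and "2 * (1 + \<gamma>) * \<epsilon> \<le> \<theta>"
  shows "measure_pmf.prob (erasure_pattern_pmf Q \<epsilon>)
           {S. \<forall>x\<in>A. \<forall>y\<in>B. real (card {i. i < n \<and> S (x ! i, y ! i)}) \<le> \<theta> * real n}
         \<ge> 1 / 2"
proof -
  define c where "c = \<theta> * real Q ^ 2 / (1 + \<gamma>)"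
  have Q: "real Q > 0" and "1 + \<gamma> > 0" using assms(1,2) by simp_all
  have c_scaled: "c * ((1 + \<gamma>) * real n / real Q ^ 2) = \<theta> * real n"
    unfolding c_def using Q \<open>1 + \<gamma> > 0\<close> by (simp add: divide_simps)
  have "1 / 2 \<le> measure_pmf.prob (erasure_pattern_pmf Q \<epsilon>)
                  {S. real (card {p \<in> alph Q \<times> alph Q. S p}) \<le> c}"
    unfolding erasure_pattern_pmf_def
  proof (rule prob_card_Pi_bernoulli_le)
    show "finite (alph Q \<times> alph Q)" by (simp add: alph_def)
    show "c > 0" using Q \<open>1 + \<gamma> > 0\<close> assms(8) by (simp add: c_def)
    have "card (alph Q \<times> alph Q) = Q ^ 2"
      by (simp add: alph_def card_cartesian_product power2_eq_square)
    then show "2 * \<epsilon> * real (card (alph Q \<times> alph Q)) \<le> c"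
      using Q \<open>1 + \<gamma> > 0\<close> assms(9)
      by (simp add: c_def pos_le_divide_eq mult_right_mono mult.commute mult.left_commute)
  qed (use assms(3,4) in simp_all)
  also have "\<dots> \<le> measure_pmf.prob (erasure_pattern_pmf Q \<epsilon>)
           {S. \<forall>x\<in>A. \<forall>y\<in>B. real (card {i. i < n \<and> S (x ! i, y ! i)}) \<le> \<theta> * real n}"
  proof (rule measure_pmf.finite_measure_mono, safe)
    fix S x y assume few: "real (card {p \<in> alph Q \<times> alph Q. S p}) \<le> c" and "x \<in> A" "y \<in> B"
    then have "real (card {i. i < n \<and> S (x ! i, y ! i)})
                 \<le> real (card {p \<in> alph Q \<times> alph Q. S p}) * ((1 + \<gamma>) * real n / real Q ^ 2)"
      using card_erased_positions_le[of x Q n y \<gamma> S] assms(5-7)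
      unfolding gamma_uniform_sets_def by blast
    also have "\<dots> \<le> c * ((1 + \<gamma>) * real n / real Q ^ 2)"
      using few \<open>1 + \<gamma> > 0\<close> by (intro mult_right_mono) auto
    finally show "real (card {i. i < n \<and> S (x ! i, y ! i)}) \<le> \<theta> * real n"
      using c_scaled by simp
  qed simp
  finally show ?thesis .
qed

theorem theorem2:
  fixes q n :: nat and \<gamma> \<epsilon> \<delta>1 \<delta>2 \<delta> :: real and A B :: "nat list set"
  defines "Q \<equiv> 2 ^ q"
  assumes "q \<ge> 1" and "n \<ge> 1" and "\<gamma> \<ge> 0" and "0 \<le> \<epsilon>" and "\<epsilon> \<le> 1"
    and "\<delta>1 \<ge> 0" and "\<delta>2 \<ge> 0"
    and "A \<subseteq> words Q n" and "B \<subseteq> words Q n"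
    and "gamma_uniform_sets Q n \<gamma> A B"
    and "real (card A) \<ge> real Q powr (real n * (1 - \<delta>1))"
    and "real (card B) \<ge> real Q powr (real n * (1 - \<delta>2))"
    and "\<delta> > 0"
  shows "measure_pmf.prob (erasure_pattern_pmf Q \<epsilon>)
           {S. zero_error_rate Q (erasure_channel S) n \<ge>
                 2 * real q * (1 - ((\<delta>1 + \<delta>2) / 2 + 2 * (1 + \<gamma>) * \<epsilon> + \<delta>)) - 2}
         \<ge> 1 / 2"
proof -
  define \<theta> where "\<theta> = 2 * (1 + \<gamma>) * \<epsilon> + \<delta>"
  have "\<theta> > 0" using assms(4,5,14) by (simp add: \<theta>_def add_nonneg_pos)
  have "1 / 2 \<le> measure_pmf.prob (erasure_pattern_pmf Q \<epsilon>)
           {S. \<forall>x\<in>A. \<forall>y\<in>B. real (card {i. i < n \<and> S (x ! i, y ! i)}) \<le> \<theta> * real n}"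
    using assms(4-6,9-11,14) \<open>\<theta> > 0\<close>
    by (intro prob_few_erasures_per_pair) (auto simp: Q_def \<theta>_def)
  also have "\<dots> \<le> measure_pmf.prob (erasure_pattern_pmf Q \<epsilon>)
                  {S. zero_error_rate Q (erasure_channel S) n \<ge>
                        2 * real q * (1 - ((\<delta>1 + \<delta>2) / 2 + \<theta>)) - 2}"
  proof (rule measure_pmf.finite_measure_mono, safe)
    fix S assume "\<forall>x\<in>A. \<forall>y\<in>B. real (card {i. i < n \<and> S (x ! i, y ! i)}) \<le> \<theta> * real n"
    then have "(real q * (real n * (1 - \<delta>1)) + real q * (real n * (1 - \<delta>2))
                 - 2 * real n - 2 * real q * (\<theta> * real n)) / real n
                 \<le> zero_error_rate Q (erasure_channel S) n"
      unfolding Q_def using assms(3) \<open>\<theta> > 0\<close> assms(9,10,12,13)[unfolded Q_def]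
      by (intro zero_error_rate_ge_few_erasures) auto
    moreover have "2 * real q * (1 - ((\<delta>1 + \<delta>2) / 2 + \<theta>)) - 2
                     = (real q * (real n * (1 - \<delta>1)) + real q * (real n * (1 - \<delta>2))
                         - 2 * real n - 2 * real q * (\<theta> * real n)) / real n"
      using assms(3) by (simp add: field_simps)
    ultimately show "zero_error_rate Q (erasure_channel S) n
                 \<ge> 2 * real q * (1 - ((\<delta>1 + \<delta>2) / 2 + \<theta>)) - 2"
      by simp
  qed simp
  finally show ?thesis by (simp only: \<theta>_def add.assoc)
qed

end
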